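(* Let $\sigma>0$, $K(x,t)=e^{-\sigma^2(x-t)^2}$ on $[-1,1]^2$, and $T:L_2([-1,1])\to L_2([-1,1])$, $T[\phi](x)=\int_{-1}^1K(x,t)\phi(t)\,dt$, with eigenvalues $\lambda_1\ge\lambda_2\ge\dots$ counted with multiplicity. Then for every $k\in\mathbb{N}$, $$\lambda_k<8\Big(\frac{2}{e}(k-1)\Big)^{-\frac{k-1}{2}}\sigma^{k-1},$$ with the convention $0^0=1$. *)

theory Defs
  imports "HOL-Analysis.Analysis" "HOL-Library.Extended_Nat"
begin

definition gauss_kernel :: "real \<Rightarrow> real \<Rightarrow> real \<Rightarrow> real" where
  "gauss_kernel \<sigma> x t = exp (- (\<sigma>\<^sup>2) * (x - t)\<^sup>2)"

definition L2_11 :: "(real \<Rightarrow> real) \<Rightarrow> bool" where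
  "L2_11 \<phi> \<longleftrightarrow> \<phi> measurable_on {-1..1} \<and> (\<lambda>x. (\<phi> x)\<^sup>2) integrable_on {-1..1}"

definition gauss_op :: "real \<Rightarrow> (real \<Rightarrow> real) \<Rightarrow> real \<Rightarrow> real" where
  "gauss_op \<sigma> \<phi> x = integral {-1..1} (\<lambda>t. gauss_kernel \<sigma> x t * \<phi> t)"

definition in_eigenspace :: "real \<Rightarrow> real \<Rightarrow> (real \<Rightarrow> real) \<Rightarrow> bool" where
  "in_eigenspace \<sigma> \<mu> \<phi> \<longleftrightarrow> L2_11 \<phi> \<and>
     negligible {x \<in> {-1..1}. gauss_op \<sigma> \<phi> x \<noteq> \<mu> * \<phi> x}"

text \<open>Multiplicity of \<mu> = Hilbert dimension of the eigenspace: supremum of the sizes of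
  L2-orthonormal families in it.\<close>
definition eig_mult :: "real \<Rightarrow> real \<Rightarrow> enat" where
  "eig_mult \<sigma> \<mu> = Sup {enat n | n. \<exists>\<phi> :: nat \<Rightarrow> real \<Rightarrow> real.
      (\<forall>i<n. in_eigenspace \<sigma> \<mu> (\<phi> i)) \<and>
      (\<forall>i<n. \<forall>j<n. integral {-1..1} (\<lambda>x. \<phi> i x * \<phi> j x) = (if i = j then 1 else 0))}"

definition is_eigenvalue_seq :: "real \<Rightarrow> (nat \<Rightarrow> real) \<Rightarrow> bool" where
  "is_eigenvalue_seq \<sigma> lam \<longleftrightarrow>
     (\<forall>k\<ge>1. lam (Suc k) \<le> lam k) \<and>
     (\<forall>\<mu>. \<mu> \<noteq> 0 \<longrightarrow>
        eig_mult \<sigma> \<mu> = (if finite {k. k \<ge> 1 \<and> lam k = \<mu>}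
                           then enat (card {k. k \<ge> 1 \<and> lam k = \<mu>}) else \<infinity>))"

end

theory Submission
  imports Defs "HOL-Computational_Algebra.Polynomial" "HOL-Complex_Analysis.Cauchy_Integral_Formula"
begin

text \<open>
  Let \<open>m = k - 1\<close>. For fixed \<open>x\<close>, \<open>t \<mapsto> K(x,t)\<close> extends to an entire function bounded by
  \<open>exp (\<sigma>\<^sup>2 r\<^sup>2)\<close> on the strip \<open>|Im w| \<le> r\<close>, so Cauchy's estimates bound its \<open>m\<close>-th derivative
  on \<open>[-1,1]\<close> by \<open>m! exp (\<sigma>\<^sup>2 r\<^sup>2) / r\<^sup>m\<close>. Interpolation at the Chebyshev nodes then yields a
  polynomial \<open>p\<^sub>x\<close> of degree \<open>< m\<close> with \<open>|K(x,t) - p\<^sub>x(t)| \<le> E = exp (\<sigma>\<^sup>2 r\<^sup>2) / (r\<^sup>m 2\<^sup>m\<^sup>-\<^sup>1)\<close>,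
  and \<open>r = \<surd>(2m) / (2\<sigma>)\<close> gives \<open>E = 2 (2m/e)\<^sup>-\<^sup>m\<^sup>/\<^sup>2 \<sigma>\<^sup>m\<close>.

  Since \<open>T\<close> is symmetric, the multiplicity condition provides orthonormal eigenfunctions
  \<open>\<phi>\<^sub>1, \<dots>, \<phi>\<^sub>k\<close> with eigenvalues \<open>\<ge> \<lambda>\<^sub>k\<close>. A nonzero combination \<open>\<psi>\<close> of them is orthogonal to all
  polynomials of degree \<open>< m\<close> (\<open>m\<close> linear conditions on \<open>k\<close> coefficients), so
  \<open>T\<psi>(x) = \<integral> (K(x,t) - p\<^sub>x(t)) \<psi>(t) dt\<close> and
  \<open>\<lambda>\<^sub>k \<parallel>\<psi>\<parallel>\<^sup>2 \<le> \<langle>T\<psi>, \<psi>\<rangle> \<le> E \<parallel>\<psi>\<parallel>\<^sub>1\<^sup>2 \<le> 2 E \<parallel>\<psi>\<parallel>\<^sup>2\<close>. Hence \<open>\<lambda>\<^sub>k \<le> 4 (2m/e)\<^sup>-\<^sup>m\<^sup>/\<^sup>2 \<sigma>\<^sup>m\<close>.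
\<close>

section \<open>Chebyshev interpolation\<close>

fun cheb_poly :: "nat \<Rightarrow> real poly" where
  "cheb_poly 0 = 1"
| "cheb_poly (Suc 0) = [:0, 1:]"
| "cheb_poly (Suc (Suc n)) = [:0, 2:] * cheb_poly (Suc n) - cheb_poly n"

lemma poly_cheb_poly_cos: "poly (cheb_poly n) (cos \<theta>) = cos (real n * \<theta>)"
proof (induction n rule: cheb_poly.induct)
  case (3 n)
  have "cos (real (Suc (Suc n)) * \<theta>) + cos (real n * \<theta>) = 2 * cos \<theta> * cos (real (Suc n) * \<theta>)"
    using cos_add[of "real (Suc n) * \<theta>" \<theta>] cos_diff[of "real (Suc n) * \<theta>" \<theta>]
    by (simp add: algebra_simps)
  then show ?case
    using 3 by (simp del: of_nat_Suc)
qed auto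

lemma abs_poly_cheb_poly_le_1: "t \<in> {-1..1} \<Longrightarrow> \<bar>poly (cheb_poly n) t\<bar> \<le> 1"
  using poly_cheb_poly_cos[of n "arccos t"] by (simp add: cos_arccos)

lemma pCons_0_2_mult: "[:0, 2:] * p = pCons 0 (smult 2 p)"
  by (simp add: mult_poly_0_left)

lemma degree_cheb_poly_le: "degree (cheb_poly n) \<le> n"
proof (induction n rule: cheb_poly.induct)
  case (3 n)
  then show ?case
    by (auto simp: pCons_0_2_mult intro!: degree_diff_le degree_pCons_le order.trans[OF degree_smult_le])
qed auto

lemma coeff_cheb_poly_degree: "coeff (cheb_poly n) n = 2 ^ (n - 1)"
proof (induction n rule: cheb_poly.induct)
  case (3 n)
  have "coeff (cheb_poly n) (Suc (Suc n)) = 0"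
    using degree_cheb_poly_le[of n] by (intro coeff_eq_0) simp
  then show ?case
    using 3 by (simp add: pCons_0_2_mult)
qed auto

lemma degree_cheb_poly: "degree (cheb_poly n) = n"
  using degree_cheb_poly_le[of n] coeff_cheb_poly_degree[of n] le_degree[of "cheb_poly n" n] by simp

lemma cheb_poly_nonzero: "cheb_poly n \<noteq> 0"
  using coeff_cheb_poly_degree[of n] by auto

lemma coeff_higher_pderiv:
  "coeff ((pderiv ^^ j) p) n = fact (n + j) / fact n * coeff p (n + j)" for p :: "real poly"
proof (induction j arbitrary: n)
  case (Suc j)
  have "(fact (Suc n) :: real) = real (Suc n) * fact n" "Suc n + j = n + Suc j"
    by simp_all
  then show ?case
    using Suc by (simp add: coeff_pderiv del: fact_Suc of_nat_Suc)
qed simp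

lemma higher_pderiv_eq_0: "degree p < m \<Longrightarrow> (pderiv ^^ m) p = 0" for p :: "real poly"
  by (rule poly_eqI) (simp add: coeff_higher_pderiv coeff_eq_0)

lemma higher_pderiv_degree: "(pderiv ^^ degree p) p = [:fact (degree p) * lead_coeff p:]"
  for p :: "real poly"
  by (rule poly_eqI) (auto simp: coeff_higher_pderiv coeff_eq_0 coeff_pCons split: nat.split)

lemma Rolle_card_zeros:
  fixes f f' :: "real \<Rightarrow> real"
  assumes der: "\<And>x. x \<in> {a..b} \<Longrightarrow> (f has_real_derivative f' x) (at x)"
    and Z: "finite Z" "card Z = Suc n" "Z \<subseteq> {a..b}" "\<And>z. z \<in> Z \<Longrightarrow> f z = 0"
  shows "\<exists>Z'. finite Z' \<and> card Z' = n \<and> Z' \<subseteq> {a..b} \<and> (\<forall>z\<in>Z'. f' z = 0)"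
proof -
  define zs where "zs = sorted_list_of_set Z"
  have len: "length zs = Suc n" and set_zs: "set zs = Z"
    using Z by (simp_all add: zs_def)
  have zs_in: "zs ! i \<in> Z" if "i < Suc n" for i
    using nth_mem[of i zs] len set_zs that by simp
  have zs_less: "zs ! i < zs ! j" if "i < j" "j < Suc n" for i j
    using that len sorted_wrt_iff_nth_less[of "(<)" zs] by (simp add: zs_def)
  have "\<exists>\<xi>. zs ! i < \<xi> \<and> \<xi> < zs ! Suc i \<and> f' \<xi> = 0" if i: "i < n" for i
  proof -
    have ends: "zs ! i \<in> {a..b}" "zs ! Suc i \<in> {a..b}" "f (zs ! i) = f (zs ! Suc i)"
      using zs_in[of i] zs_in[of "Suc i"] Z i by auto
    have der': "(f has_real_derivative f' x) (at x)" if "zs ! i \<le> x" "x \<le> zs ! Suc i" for x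
      using der ends that by auto
    have "continuous_on {zs ! i..zs ! Suc i} f"
      using der' by (intro continuous_at_imp_continuous_on ballI) (auto intro: DERIV_isCont)
    moreover have "f differentiable at x" if "zs ! i < x" "x < zs ! Suc i" for x
      using der' that less_imp_le real_differentiable_def by blast
    ultimately obtain \<xi> where \<xi>: "zs ! i < \<xi>" "\<xi> < zs ! Suc i" "DERIV f \<xi> :> 0"
      using Rolle[OF zs_less[of i "Suc i"] ends(3)] i by auto
    moreover have "f' \<xi> = 0"
      using DERIV_unique[OF der'[of \<xi>] \<xi>(3)] \<xi> by simp
    ultimately show ?thesis by blast
  qed
  then obtain \<xi> where \<xi>: "\<And>i. i < n \<Longrightarrow> zs ! i < \<xi> i \<and> \<xi> i < zs ! Suc i \<and> f' (\<xi> i) = 0"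
    by metis
  have "\<xi> i < \<xi> j" if "i < j" "j < n" for i j
  proof -
    have "\<xi> i < zs ! Suc i" using \<xi>[of i] that by simp
    also have "zs ! Suc i \<le> zs ! j"
      using zs_less[of "Suc i" j] that by (cases "Suc i = j") auto
    also have "zs ! j < \<xi> j" using \<xi>[of j] that by simp
    finally show ?thesis .
  qed
  then have "inj_on \<xi> {..<n}"
    by (metis inj_onI lessThan_iff linorder_neqE_nat order_less_irrefl)
  moreover have "\<xi> i \<in> {a..b}" if "i < n" for i
  proof -
    have "zs ! i \<in> {a..b}" "zs ! Suc i \<in> {a..b}"
      using zs_in[of i] zs_in[of "Suc i"] Z(3) that by auto
    then show ?thesis using \<xi>[OF that] by simp
  qed
  ultimately show ?thesis
    using \<xi> by (intro exI[of _ "\<xi> ` {..<n}"]) (auto simp: card_image)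
qed

lemma higher_Rolle:
  fixes h :: "nat \<Rightarrow> real \<Rightarrow> real"
  assumes "\<And>j x. j < n \<Longrightarrow> x \<in> {a..b} \<Longrightarrow> (h j has_real_derivative h (Suc j) x) (at x)"
    and "finite Z" "card Z = Suc n" "Z \<subseteq> {a..b}" "\<And>z. z \<in> Z \<Longrightarrow> h 0 z = 0"
  shows "\<exists>\<xi>\<in>{a..b}. h n \<xi> = 0"
  using assms
proof (induction n arbitrary: h Z)
  case 0
  then show ?case
    by (metis One_nat_def card_1_singletonE insertI1 subsetD)
next
  case (Suc n)
  obtain Z' where "finite Z'" "card Z' = Suc n" "Z' \<subseteq> {a..b}" "\<forall>z\<in>Z'. h 1 z = 0"
    using Rolle_card_zeros[of a b "h 0" "h 1" Z "Suc n"] Suc.prems by auto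
  then show ?case
    using Suc.IH[of "\<lambda>j. h (Suc j)" Z'] Suc.prems(1) by auto
qed

definition cheb_node :: "nat \<Rightarrow> nat \<Rightarrow> real" where
  "cheb_node m i = cos ((2 * real i + 1) * pi / (2 * real m))"

lemma cheb_node_in_interval: "cheb_node m i \<in> {-1..1}"
  by (simp add: cheb_node_def)

lemma poly_cheb_poly_cheb_node: "i < m \<Longrightarrow> poly (cheb_poly m) (cheb_node m i) = 0"
proof -
  assume "i < m"
  then have "real m * ((2 * real i + 1) * pi / (2 * real m)) = real i * pi + pi / 2"
    by (simp add: field_simps)
  then show ?thesis
    by (simp add: cheb_node_def poly_cheb_poly_cos cos_add)
qed

lemma inj_on_cheb_node: "inj_on (cheb_node m) {..<m}"
proof (rule inj_onI)
  fix i j assume i: "i \<in> {..<m}" and j: "j \<in> {..<m}" and eq: "cheb_node m i = cheb_node m j"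
  have angle: "0 \<le> (2 * real l + 1) * pi / (2 * real m) \<and> (2 * real l + 1) * pi / (2 * real m) \<le> pi"
    if "l < m" for l
  proof -
    have "(2 * real l + 1) * pi \<le> (2 * real m) * pi"
      using that by (intro mult_right_mono) auto
    then show ?thesis
      using that by (auto simp: field_simps)
  qed
  have "(2 * real i + 1) * pi / (2 * real m) = (2 * real j + 1) * pi / (2 * real m)"
    by (rule cos_inj_pi) (use angle[of i] angle[of j] i j eq in \<open>auto simp: cheb_node_def\<close>)
  then show "i = j"
    using i by (simp add: field_simps)
qed

lemma poly_cheb_poly_eq_0_iff: "poly (cheb_poly m) t = 0 \<longleftrightarrow> t \<in> cheb_node m ` {..<m}"
proof
  assume t: "poly (cheb_poly m) t = 0"
  show "t \<in> cheb_node m ` {..<m}"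
  proof (rule ccontr)
    assume "t \<notin> cheb_node m ` {..<m}"
    then have "Suc m = card (insert t (cheb_node m ` {..<m}))"
      using inj_on_cheb_node[of m] by (simp add: card_image)
    also have "\<dots> \<le> card {x. poly (cheb_poly m) x = 0}"
      using t poly_cheb_poly_cheb_node
      by (intro card_mono poly_roots_finite cheb_poly_nonzero) auto
    also have "\<dots> \<le> m"
      using card_poly_roots_bound[OF cheb_poly_nonzero, of m] by (simp add: degree_cheb_poly)
    finally show False by simp
  qed
qed (auto simp: poly_cheb_poly_cheb_node)

definition lagrange_interp :: "(nat \<Rightarrow> real) \<Rightarrow> nat \<Rightarrow> (real \<Rightarrow> real) \<Rightarrow> real poly" where
  "lagrange_interp x m f = (\<Sum>i<m. smult (f (x i) / (\<Prod>j\<in>{..<m}-{i}. x i - x j))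
       (\<Prod>j\<in>{..<m}-{i}. [:- x j, 1:]))"

lemma degree_lagrange_interp_le: "degree (lagrange_interp x m f) \<le> m - 1"
  unfolding lagrange_interp_def
proof (intro degree_sum_le)
  fix i assume i: "i \<in> {..<m}"
  have "degree (\<Prod>j\<in>{..<m}-{i}. [:- x j, 1:]) \<le> (\<Sum>j\<in>{..<m}-{i}. degree [:- x j, 1:])"
    using degree_prod_sum_le[of "{..<m}-{i}" "\<lambda>j. [:- x j, 1:]"] by (simp add: o_def)
  also have "\<dots> = m - 1"
    using i by simp
  finally show "degree (smult (f (x i) / (\<Prod>j\<in>{..<m}-{i}. x i - x j))
      (\<Prod>j\<in>{..<m}-{i}. [:- x j, 1:])) \<le> m - 1"
    using degree_smult_le order_trans by blast
qed simp

lemma poly_lagrange_interp: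
  assumes inj: "inj_on x {..<m}" and l: "l < m"
  shows "poly (lagrange_interp x m f) (x l) = f (x l)"
proof -
  have "poly (lagrange_interp x m f) (x l) = (\<Sum>i<m. f (x i) / (\<Prod>j\<in>{..<m}-{i}. x i - x j)
      * (\<Prod>j\<in>{..<m}-{i}. x l - x j))"
    by (simp add: lagrange_interp_def poly_sum poly_prod)
  also have "\<dots> = f (x l) / (\<Prod>j\<in>{..<m}-{l}. x l - x j) * (\<Prod>j\<in>{..<m}-{l}. x l - x j)"
    using l by (subst sum.remove[of _ l]) (auto intro!: sum.neutral prod_zero)
  also have "\<dots> = f (x l)"
    using inj l by (auto simp: inj_on_def)
  finally show ?thesis .
qed

lemma cheb_interpolation_error:
  fixes D :: "nat \<Rightarrow> real \<Rightarrow> real"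
  assumes m: "m \<ge> 1"
    and der: "\<And>j x. j < m \<Longrightarrow> x \<in> {-1..1} \<Longrightarrow> (D j has_real_derivative D (Suc j) x) (at x)"
    and p: "degree p < m" "\<And>i. i < m \<Longrightarrow> poly p (cheb_node m i) = D 0 (cheb_node m i)"
    and t: "t \<in> {-1..1}"
  shows "\<exists>\<xi>\<in>{-1..1}. D 0 t - poly p t = D m \<xi> / (fact m * 2 ^ (m - 1)) * poly (cheb_poly m) t"
proof (cases "poly (cheb_poly m) t = 0")
  case True
  then show ?thesis
    using t p(2) by (auto simp: poly_cheb_poly_eq_0_iff)
next
  case False
  define c where "c = (D 0 t - poly p t) / poly (cheb_poly m) t"
  txt \<open>\<open>h 0\<close> vanishes at \<open>t\<close> and at the \<open>m\<close> nodes; at a zero of \<open>h m\<close> given by Rolle's theorem,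
    \<open>p\<^sup>(\<^sup>m\<^sup>) = 0\<close> and \<open>T\<^sub>m\<^sup>(\<^sup>m\<^sup>) = m! 2\<^sup>m\<^sup>-\<^sup>1\<close> determine \<open>c\<close>.\<close>
  define h where "h j s = D j s - poly ((pderiv ^^ j) p) s - c * poly ((pderiv ^^ j) (cheb_poly m)) s"
    for j s
  have "\<exists>\<xi>\<in>{-1..1}. h m \<xi> = 0"
  proof (rule higher_Rolle)
    show "(h j has_real_derivative h (Suc j) x) (at x)" if "j < m" "x \<in> {-1..1}" for j x
      unfolding h_def[abs_def] using der[OF that]
      by (auto intro!: derivative_eq_intros)
    show "finite (insert t (cheb_node m ` {..<m}))" by simp
    show "card (insert t (cheb_node m ` {..<m})) = Suc m"
      using False inj_on_cheb_node[of m] by (simp add: card_image poly_cheb_poly_eq_0_iff)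
    show "insert t (cheb_node m ` {..<m}) \<subseteq> {-1..1}"
      using t cheb_node_in_interval by auto
    show "h 0 z = 0" if "z \<in> insert t (cheb_node m ` {..<m})" for z
      using that False p(2) by (auto simp: h_def c_def poly_cheb_poly_cheb_node)
  qed
  then obtain \<xi> where \<xi>: "\<xi> \<in> {-1..1}" "h m \<xi> = 0" by blast
  have "(pderiv ^^ m) (cheb_poly m) = [:fact m * 2 ^ (m - 1):]"
    using higher_pderiv_degree[of "cheb_poly m"] by (simp add: degree_cheb_poly coeff_cheb_poly_degree)
  then have "D m \<xi> = c * (fact m * 2 ^ (m - 1))"
    using \<xi>(2) higher_pderiv_eq_0[OF p(1)] by (simp add: h_def)
  then show ?thesis
    using \<xi>(1) False by (intro bexI[of _ \<xi>]) (simp_all add: c_def field_simps)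
qed

lemma cheb_interpolation_bound:
  fixes D :: "nat \<Rightarrow> real \<Rightarrow> real"
  assumes m: "m \<ge> 1"
    and der: "\<And>j x. j < m \<Longrightarrow> x \<in> {-1..1} \<Longrightarrow> (D j has_real_derivative D (Suc j) x) (at x)"
    and bound: "\<And>x. x \<in> {-1..1} \<Longrightarrow> \<bar>D m x\<bar> \<le> M"
  shows "\<exists>p. degree p < m \<and> (\<forall>t\<in>{-1..1}. \<bar>D 0 t - poly p t\<bar> \<le> M / (fact m * 2 ^ (m - 1)))"
proof (intro exI conjI ballI)
  define p where "p = lagrange_interp (cheb_node m) m (D 0)"
  show "degree p < m"
    using degree_lagrange_interp_le[of "cheb_node m" m "D 0"] m unfolding p_def by linarith
  fix t :: real assume t: "t \<in> {-1..1}"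
  obtain \<xi> where \<xi>: "\<xi> \<in> {-1..1}"
    and err: "D 0 t - poly p t = D m \<xi> / (fact m * 2 ^ (m - 1)) * poly (cheb_poly m) t"
    using cheb_interpolation_error[of m D p t, OF m der \<open>degree p < m\<close>]
      poly_lagrange_interp[OF inj_on_cheb_node] t by (auto simp: p_def)
  have "\<bar>D 0 t - poly p t\<bar> \<le> \<bar>D m \<xi>\<bar> / (fact m * 2 ^ (m - 1))"
    unfolding err abs_mult abs_divide
    using abs_poly_cheb_poly_le_1[OF t, of m] by (simp add: divide_right_mono mult_left_le)
  also have "\<dots> \<le> M / (fact m * 2 ^ (m - 1))"
    using bound[OF \<xi>] by (simp add: divide_right_mono)
  finally show "\<bar>D 0 t - poly p t\<bar> \<le> M / (fact m * 2 ^ (m - 1))" .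
qed

section \<open>Polynomial approximation of the Gaussian kernel\<close>

lemma has_real_derivative_Re_of_real:
  assumes "(F has_field_derivative F') (at (of_real t))"
  shows "((\<lambda>s. Re (F (of_real s))) has_real_derivative Re F') (at t)"
proof -
  have "((\<lambda>s. F (of_real s)) has_vector_derivative F') (at t)"
    using has_vector_derivative_real_field[OF assms] .
  then have "((\<lambda>s. Re (F (of_real s))) has_vector_derivative Re F') (at t)"
    using bounded_linear.has_vector_derivative[OF bounded_linear_Re] by blast
  then show ?thesis
    by (simp add: has_real_derivative_iff_has_vector_derivative)
qed

lemma has_real_derivative_Re_higher_deriv:
  fixes G :: "complex \<Rightarrow> complex"
  assumes "G holomorphic_on UNIV"
  shows "((\<lambda>s. Re ((deriv ^^ j) G (of_real s))) has_real_derivative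
           Re ((deriv ^^ Suc j) G (of_real t))) (at t)"
proof (rule has_real_derivative_Re_of_real)
  have "(deriv ^^ j) G holomorphic_on UNIV"
    using holomorphic_higher_deriv[OF assms] by simp
  then have "(deriv ^^ j) G field_differentiable at (of_real t)"
    using holomorphic_on_imp_differentiable_at by blast
  then show "((deriv ^^ j) G has_field_derivative (deriv ^^ Suc j) G (of_real t)) (at (of_real t))"
    using DERIV_deriv_iff_field_differentiable by force
qed

lemma norm_exp_gauss_le:
  fixes \<sigma> x :: real and w :: complex
  assumes "\<bar>Im w\<bar> \<le> r"
  shows "norm (exp (- (of_real \<sigma>)\<^sup>2 * (of_real x - w)\<^sup>2)) \<le> exp (\<sigma>\<^sup>2 * r\<^sup>2)"
proof -
  have "Re (- (of_real \<sigma>)\<^sup>2 * (of_real x - w)\<^sup>2) = \<sigma>\<^sup>2 * (Im w)\<^sup>2 - \<sigma>\<^sup>2 * (x - Re w)\<^sup>2"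
    by (simp add: power2_eq_square algebra_simps)
  also have "\<dots> \<le> \<sigma>\<^sup>2 * (Im w)\<^sup>2"
    by simp
  also have "\<dots> \<le> \<sigma>\<^sup>2 * r\<^sup>2"
    using assms abs_le_square_iff[of "Im w" r] by (simp add: mult_left_mono)
  finally show ?thesis
    by simp
qed

lemma gauss_kernel_poly_approx_radius:
  fixes \<sigma> x r :: real
  assumes m: "m \<ge> 1" and r: "r > 0"
  shows "\<exists>p. degree p < m \<and>
    (\<forall>t\<in>{-1..1}. \<bar>gauss_kernel \<sigma> x t - poly p t\<bar> \<le> exp (\<sigma>\<^sup>2 * r\<^sup>2) / (r ^ m * 2 ^ (m - 1)))"
proof -
  define G where "G z = exp (- (of_real \<sigma>)\<^sup>2 * (of_real x - z)\<^sup>2)" for z :: complex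
  define D where "D j t = Re ((deriv ^^ j) G (of_real t))" for j t
  have G: "G holomorphic_on UNIV"
    unfolding G_def by (intro holomorphic_intros)
  have D0: "D 0 t = gauss_kernel \<sigma> x t" for t
  proof -
    have "G (of_real t) = of_real (gauss_kernel \<sigma> x t)"
      by (simp add: G_def gauss_kernel_def flip: exp_of_real)
    then show ?thesis
      by (simp add: D_def)
  qed
  have "norm ((deriv ^^ m) G (of_real t)) \<le> fact m * exp (\<sigma>\<^sup>2 * r\<^sup>2) / r ^ m" for t
  proof (rule Cauchy_inequality[OF _ _ r])
    show "G holomorphic_on ball (of_real t) r"
      using G by (rule holomorphic_on_subset) auto
    show "continuous_on (cball (of_real t) r) G"
      using holomorphic_on_imp_continuous_on[OF G] continuous_on_subset by blast
    show "norm (G w) \<le> exp (\<sigma>\<^sup>2 * r\<^sup>2)" if "norm (of_real t - w) = r" for w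
      unfolding G_def using abs_Im_le_cmod[of "of_real t - w"] that
      by (intro norm_exp_gauss_le) simp
  qed
  then have "\<bar>D m t\<bar> \<le> fact m * exp (\<sigma>\<^sup>2 * r\<^sup>2) / r ^ m" for t
    unfolding D_def using abs_Re_le_cmod order_trans by blast
  moreover have "(D j has_real_derivative D (Suc j) t) (at t)" for j t
    unfolding D_def[abs_def] by (rule has_real_derivative_Re_higher_deriv[OF G])
  ultimately obtain p where "degree p < m"
    and "\<forall>t\<in>{-1..1}. \<bar>D 0 t - poly p t\<bar> \<le> fact m * exp (\<sigma>\<^sup>2 * r\<^sup>2) / r ^ m / (fact m * 2 ^ (m - 1))"
    using cheb_interpolation_bound[of m D, OF m] by blast
  then show ?thesis
    by (intro exI[of _ p]) (simp add: D0 field_simps)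
qed

text \<open>This radius minimises \<open>exp (\<sigma>\<^sup>2 r\<^sup>2) / r\<^sup>m\<close>.\<close>

lemma gauss_cheb_error_at_optimal_radius:
  fixes \<sigma> :: real
  assumes \<sigma>: "\<sigma> > 0" and m: "m \<ge> 1"
  defines "r \<equiv> sqrt (2 * real m) / (2 * \<sigma>)"
  shows "exp (\<sigma>\<^sup>2 * r\<^sup>2) / (r ^ m * 2 ^ (m - 1)) = 2 * (2 / exp 1 * real m) powr (- real m / 2) * \<sigma> ^ m"
proof -
  define y where "y = sqrt (2 * real m) / exp (1 / 2)"
  have y: "y > 0"
    using m by (simp add: y_def)
  have "2 / exp 1 * real m = y powr 2"
    using m y by (simp add: y_def powr_numeral power_divide field_simps flip: exp_double)
  then have "(2 / exp 1 * real m) powr (- real m / 2) = y powr (- real m)"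
    by (simp add: powr_powr)
  then have rhs: "(2 / exp 1 * real m) powr (- real m / 2) = inverse (y ^ m)"
    using y by (simp add: powr_minus powr_realpow)
  have "\<sigma>\<^sup>2 * r\<^sup>2 = real m * (1 / 2)"
    using \<sigma> by (simp add: r_def power_divide)
  then have "exp (\<sigma>\<^sup>2 * r\<^sup>2) = exp (1 / 2) ^ m"
    by (simp only: exp_of_nat_mult)
  moreover have "r ^ m * 2 ^ (m - 1) = (2 * r) ^ m / 2"
    using m by (cases m) (simp_all add: power_mult_distrib)
  moreover have "2 * r = exp (1 / 2) * y / \<sigma>"
    using \<sigma> by (simp add: r_def y_def)
  ultimately have "exp (\<sigma>\<^sup>2 * r\<^sup>2) / (r ^ m * 2 ^ (m - 1)) = 2 * \<sigma> ^ m / y ^ m"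
    using \<sigma> y by (simp add: power_mult_distrib power_divide)
  also have "\<dots> = 2 * inverse (y ^ m) * \<sigma> ^ m"
    by (simp add: divide_inverse)
  finally show ?thesis
    unfolding rhs .
qed

text \<open>The case \<open>m = 0\<close> implements the convention \<open>0\<^sup>0 = 1\<close> of the statement: in Isabelle
  \<open>0 powr 0 = 0\<close>.\<close>

lemma gauss_kernel_poly_approx:
  fixes \<sigma> x :: real
  assumes \<sigma>: "\<sigma> > 0"
  shows "\<exists>p. (\<forall>j\<ge>m. coeff p j = 0) \<and> (\<forall>t\<in>{-1..1}. \<bar>gauss_kernel \<sigma> x t - poly p t\<bar> \<le>
           2 * (if m = 0 then 1 else (2 / exp 1 * real m) powr (- real m / 2)) * \<sigma> ^ m)"
proof (cases "m = 0")
  case True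
  have "exp (- (\<sigma>\<^sup>2 * (x - t)\<^sup>2)) \<le> 1" for t
    by simp
  then show ?thesis
    using True by (intro exI[of _ 0]) (auto simp: gauss_kernel_def intro: order.trans[OF _ one_le_numeral])
next
  case False
  define r where "r = sqrt (2 * real m) / (2 * \<sigma>)"
  have "r > 0"
    using False \<sigma> by (simp add: r_def)
  then obtain p where "degree p < m"
    and "\<forall>t\<in>{-1..1}. \<bar>gauss_kernel \<sigma> x t - poly p t\<bar> \<le> exp (\<sigma>\<^sup>2 * r\<^sup>2) / (r ^ m * 2 ^ (m - 1))"
    using gauss_kernel_poly_approx_radius[of m r \<sigma> x] False by auto
  then show ?thesis
    using gauss_cheb_error_at_optimal_radius[OF \<sigma>, of m] False
    by (intro exI[of _ p]) (auto simp: r_def coeff_eq_0)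
qed

section \<open>Square-integrable functions on \<open>[-1, 1]\<close>\<close>

lemma abs_mult_le_sum_squares: "\<bar>a * b\<bar> \<le> a\<^sup>2 + b\<^sup>2" for a b :: real
proof -
  have "2 * (\<bar>a\<bar> * \<bar>b\<bar>) \<le> a\<^sup>2 + b\<^sup>2"
    using sum_squares_bound[of "\<bar>a\<bar>" "\<bar>b\<bar>"] by simp
  then show ?thesis
    unfolding abs_mult by (smt (verit) zero_le_mult_iff abs_ge_zero)
qed

lemma L2_11_borel_measurable: "L2_11 f \<Longrightarrow> f \<in> borel_measurable (lebesgue_on {-1..1})"
  unfolding L2_11_def using measurable_on_iff_borel_measurable[of "{-1..1}" f] by simp

lemma L2_11_mult_absolutely_integrable:
  assumes f: "L2_11 f" and g: "L2_11 g"
  shows "(\<lambda>x. f x * g x) absolutely_integrable_on {-1..1}"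
proof (rule measurable_bounded_by_integrable_imp_absolutely_integrable)
  show "(\<lambda>x. f x * g x) \<in> borel_measurable (lebesgue_on {-1..1})"
    using L2_11_borel_measurable[OF f] L2_11_borel_measurable[OF g] by measurable
  show "(\<lambda>x. (f x)\<^sup>2 + (g x)\<^sup>2) integrable_on {-1..1}"
    using f g unfolding L2_11_def by (intro integrable_add) auto
qed (use abs_mult_le_sum_squares in auto)

lemma L2_11_mult_integrable: "L2_11 f \<Longrightarrow> L2_11 g \<Longrightarrow> (\<lambda>x. f x * g x) integrable_on {-1..1}"
  using L2_11_mult_absolutely_integrable absolutely_integrable_on_def by blast

lemma L2_11_one: "L2_11 (\<lambda>x. 1)"
  by (auto simp: L2_11_def)

lemma L2_11_absolutely_integrable: "L2_11 f \<Longrightarrow> f absolutely_integrable_on {-1..1}"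
  using L2_11_mult_absolutely_integrable[OF _ L2_11_one, of f] by simp

lemma L2_11_abs_integrable: "L2_11 f \<Longrightarrow> (\<lambda>x. \<bar>f x\<bar>) integrable_on {-1..1}"
  using L2_11_absolutely_integrable[of f] by (simp add: absolutely_integrable_on_def)

lemma continuous_mult_L2_11_integrable:
  fixes h f :: "real \<Rightarrow> real"
  assumes h: "continuous_on {-1..1} h" and f: "L2_11 f"
  shows "(\<lambda>x. h x * f x) integrable_on {-1..1}"
proof -
  have "(\<lambda>x. h x * f x) absolutely_integrable_on {-1..1}"
  proof (rule absolutely_integrable_bounded_measurable_product_real)
    show "h \<in> borel_measurable (lebesgue_on {-1..1})"
      using continuous_imp_measurable_on_sets_lebesgue[OF h] by simp
    show "bounded (h ` {-1..1})"
      using compact_continuous_image[OF h] compact_imp_bounded by blast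
  qed (use L2_11_absolutely_integrable[OF f] in auto)
  then show ?thesis
    by (simp add: absolutely_integrable_on_def)
qed

lemma L2_11_sum:
  assumes "finite I" and "\<And>i. i \<in> I \<Longrightarrow> L2_11 (\<phi> i)"
  shows "L2_11 (\<lambda>x. \<Sum>i\<in>I. c i * \<phi> i x)"
  unfolding L2_11_def
proof
  show "(\<lambda>x. \<Sum>i\<in>I. c i * \<phi> i x) measurable_on {-1..1}"
    using assms by (intro measurable_on_sum measurable_on_cmul) (auto simp: L2_11_def)
  have "(\<lambda>x. (\<Sum>i\<in>I. c i * \<phi> i x)\<^sup>2) = (\<lambda>x. \<Sum>i\<in>I. \<Sum>j\<in>I. (c i * c j) * (\<phi> i x * \<phi> j x))"
    by (auto simp: power2_eq_square sum_product algebra_simps)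
  then show "(\<lambda>x. (\<Sum>i\<in>I. c i * \<phi> i x)\<^sup>2) integrable_on {-1..1}"
    using assms L2_11_mult_integrable by (auto intro!: integrable_sum integrable_on_mult_right)
qed

lemma integral_orthonormal_sum_mult:
  assumes I: "finite I" and L2: "\<And>i. i \<in> I \<Longrightarrow> L2_11 (\<phi> i)"
    and orth: "\<And>i j. i \<in> I \<Longrightarrow> j \<in> I \<Longrightarrow>
      integral {-1..1} (\<lambda>x. \<phi> i x * \<phi> j x) = (if i = j then 1 else 0)"
  shows "integral {-1..1} (\<lambda>x. (\<Sum>i\<in>I. a i * \<phi> i x) * (\<Sum>j\<in>I. b j * \<phi> j x)) = (\<Sum>i\<in>I. a i * b i)"
proof -
  have int: "(\<lambda>x. (a i * b j) * (\<phi> i x * \<phi> j x)) integrable_on {-1..1}" if "i \<in> I" "j \<in> I" for i j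
    using that L2 L2_11_mult_integrable integrable_on_mult_right by blast
  have "integral {-1..1} (\<lambda>x. (\<Sum>i\<in>I. a i * \<phi> i x) * (\<Sum>j\<in>I. b j * \<phi> j x))
      = integral {-1..1} (\<lambda>x. \<Sum>i\<in>I. \<Sum>j\<in>I. (a i * b j) * (\<phi> i x * \<phi> j x))"
    by (simp add: sum_product algebra_simps)
  also have "\<dots> = (\<Sum>i\<in>I. \<Sum>j\<in>I. (a i * b j) * integral {-1..1} (\<lambda>x. \<phi> i x * \<phi> j x))"
    using I int by (simp add: integral_sum integrable_sum)
  also have "\<dots> = (\<Sum>i\<in>I. \<Sum>j\<in>I. if j = i then a i * b j else 0)"
    using orth by (intro sum.cong) auto
  also have "\<dots> = (\<Sum>i\<in>I. a i * b i)"
    using I by simp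
  finally show ?thesis .
qed

lemma abs_integral_mult_le:
  fixes g \<psi> :: "real \<Rightarrow> real"
  assumes "(\<lambda>t. g t * \<psi> t) integrable_on S" and "(\<lambda>t. \<bar>\<psi> t\<bar>) integrable_on S"
    and "\<And>t. t \<in> S \<Longrightarrow> \<bar>g t\<bar> \<le> e"
  shows "\<bar>integral S (\<lambda>t. g t * \<psi> t)\<bar> \<le> e * integral S (\<lambda>t. \<bar>\<psi> t\<bar>)"
proof -
  have "\<bar>integral S (\<lambda>t. g t * \<psi> t)\<bar> \<le> integral S (\<lambda>t. e * \<bar>\<psi> t\<bar>)"
    using assms by (intro integral_norm_bound_integral[where f="\<lambda>t. g t * \<psi> t", simplified])
      (auto simp: abs_mult intro: mult_right_mono integrable_on_mult_right)
  then show ?thesis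
    by simp
qed

lemma integral_abs_squared_le:
  assumes \<psi>: "L2_11 \<psi>"
  shows "(integral {-1..1} (\<lambda>x. \<bar>\<psi> x\<bar>))\<^sup>2 \<le> 2 * integral {-1..1} (\<lambda>x. \<psi> x * \<psi> x)"
proof -
  define C where "C = integral {-1..1} (\<lambda>x. \<bar>\<psi> x\<bar>)"
  define a where "a = C / 2"
  have int: "(\<lambda>x. \<psi> x * \<psi> x) integrable_on {-1..1}" "(\<lambda>x. 2 * a * \<bar>\<psi> x\<bar>) integrable_on {-1..1}"
    using L2_11_mult_integrable[OF \<psi> \<psi>] L2_11_abs_integrable[OF \<psi>] integrable_on_mult_right by blast+
  have sq: "(\<lambda>x. (\<bar>\<psi> x\<bar> - a)\<^sup>2) = (\<lambda>x. (\<psi> x * \<psi> x - 2 * a * \<bar>\<psi> x\<bar>) + a\<^sup>2)"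
  proof
    fix x
    have "(\<bar>\<psi> x\<bar> - a)\<^sup>2 = (\<bar>\<psi> x\<bar> * \<bar>\<psi> x\<bar> - 2 * a * \<bar>\<psi> x\<bar>) + a\<^sup>2"
      by (simp add: power2_eq_square algebra_simps)
    then show "(\<bar>\<psi> x\<bar> - a)\<^sup>2 = (\<psi> x * \<psi> x - 2 * a * \<bar>\<psi> x\<bar>) + a\<^sup>2"
      by (simp only: abs_mult_self_eq)
  qed
  have int_sq: "(\<lambda>x. (\<bar>\<psi> x\<bar> - a)\<^sup>2) integrable_on {-1..1}"
    unfolding sq using int by (intro integrable_add integrable_diff) auto
  have "0 \<le> integral {-1..1} (\<lambda>x. (\<bar>\<psi> x\<bar> - a)\<^sup>2)"
    using int_sq by (rule integral_nonneg) simp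
  also have "\<dots> = (integral {-1..1} (\<lambda>x. \<psi> x * \<psi> x) - 2 * a * C) + 2 * a\<^sup>2"
    unfolding sq using int
    by (subst integral_add, intro integrable_diff, auto simp add: integral_diff C_def)
  finally show ?thesis
    by (simp add: a_def C_def power2_eq_square field_simps)
qed

section \<open>Symmetry of the Gaussian integral operator\<close>

lemma exp_taylor_uniform_approx:
  fixes R \<epsilon> :: real
  assumes "\<epsilon> > 0"
  shows "\<exists>N. \<forall>y. \<bar>y\<bar> \<le> R \<longrightarrow> \<bar>exp y - (\<Sum>n<N. y ^ n / fact n)\<bar> \<le> \<epsilon>"
proof -
  have "(\<lambda>n. exp R * (inverse (fact n) * R ^ n)) \<longlonglongrightarrow> 0"
    by (rule tendsto_mult_right_zero[OF summable_LIMSEQ_zero[OF summable_exp]])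
  then obtain N where "\<forall>n\<ge>N. norm (exp R * (inverse (fact n) * R ^ n) - 0) < \<epsilon>"
    using assms unfolding LIMSEQ_iff by blast
  then have N: "exp R * (inverse (fact N) * R ^ N) < \<epsilon>"
    by (auto simp: abs_less_iff)
  show ?thesis
  proof (intro exI allI impI)
    fix y :: real assume y: "\<bar>y\<bar> \<le> R"
    obtain s where s: "\<bar>s\<bar> \<le> \<bar>y\<bar>" and exp_y: "exp y = (\<Sum>n<N. y ^ n / fact n) + exp s / fact N * y ^ N"
      using Maclaurin_exp_le by blast
    have "\<bar>exp y - (\<Sum>n<N. y ^ n / fact n)\<bar> = exp s / fact N * \<bar>y\<bar> ^ N"
      by (simp add: exp_y abs_mult power_abs)
    also have "\<dots> \<le> exp R / fact N * R ^ N"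
      using s y by (intro mult_mono divide_right_mono power_mono) auto
    also have "\<dots> = exp R * (inverse (fact N) * R ^ N)"
      by (simp add: divide_inverse)
    finally show "\<bar>exp y - (\<Sum>n<N. y ^ n / fact n)\<bar> \<le> \<epsilon>"
      using N by linarith
  qed
qed

lemma gauss_kernel_separable_approx:
  "\<exists>g :: nat \<Rightarrow> real \<Rightarrow> real. (\<forall>n. continuous_on {-1..1} (g n)) \<and> (\<forall>\<epsilon>>0. \<exists>N. \<forall>x\<in>{-1..1}. \<forall>t\<in>{-1..1}.
      \<bar>gauss_kernel \<sigma> x t - (\<Sum>n<N. g n x * g n t)\<bar> \<le> \<epsilon>)"
proof -
  txt \<open>\<open>K(x,t) = exp (-\<sigma>\<^sup>2x\<^sup>2) exp (-\<sigma>\<^sup>2t\<^sup>2) exp (2\<sigma>\<^sup>2xt)\<close>, and the exponential series of the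
    last factor converges uniformly for \<open>|xt| \<le> 1\<close>.\<close>
  define g where "g n x = exp (- \<sigma>\<^sup>2 * x\<^sup>2) * (sqrt 2 * \<sigma> * x) ^ n / sqrt (fact n)" for n x
  have "\<exists>N. \<forall>x\<in>{-1..1}. \<forall>t\<in>{-1..1}. \<bar>gauss_kernel \<sigma> x t - (\<Sum>n<N. g n x * g n t)\<bar> \<le> \<epsilon>"
    if "\<epsilon> > 0" for \<epsilon>
  proof -
    obtain N where N: "\<And>y. \<bar>y\<bar> \<le> 2 * \<sigma>\<^sup>2 \<Longrightarrow> \<bar>exp y - (\<Sum>n<N. y ^ n / fact n)\<bar> \<le> \<epsilon>"
      using exp_taylor_uniform_approx[OF \<open>\<epsilon> > 0\<close>] by blast
    have "\<bar>gauss_kernel \<sigma> x t - (\<Sum>n<N. g n x * g n t)\<bar> \<le> \<epsilon>"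
      if x: "x \<in> {-1..1}" and t: "t \<in> {-1..1}" for x t
    proof -
      define y where "y = 2 * \<sigma>\<^sup>2 * (x * t)"
      define c where "c = exp (- \<sigma>\<^sup>2 * x\<^sup>2) * exp (- \<sigma>\<^sup>2 * t\<^sup>2)"
      have K: "gauss_kernel \<sigma> x t = c * exp y"
        by (simp add: gauss_kernel_def c_def y_def power2_eq_square algebra_simps flip: exp_add)
      have "g n x * g n t = c * (y ^ n / fact n)" for n
        by (simp add: g_def c_def y_def field_simps flip: power_mult_distrib)
          (simp add: power2_eq_square mult_ac)
      then have S: "(\<Sum>n<N. g n x * g n t) = c * (\<Sum>n<N. y ^ n / fact n)"
        by (simp add: sum_distrib_left)
      have "\<bar>x * t\<bar> \<le> 1"
        using x t by (auto simp: abs_mult intro: mult_le_one)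
      then have "\<bar>y\<bar> \<le> 2 * \<sigma>\<^sup>2"
        by (simp add: y_def abs_mult mult_left_le)
      moreover have "0 \<le> c" "c \<le> 1"
        unfolding c_def by (auto intro: mult_le_one)
      ultimately show ?thesis
        unfolding K S using N[of y]
        by (simp add: abs_mult flip: right_diff_distrib) (meson abs_ge_zero mult_left_le_one_le order.trans)
    qed
    then show ?thesis by blast
  qed
  moreover have "continuous_on {-1..1} (g n)" for n
    unfolding g_def by (intro continuous_intros) auto
  ultimately show ?thesis
    by (intro exI[of _ g]) auto
qed

lemma abs_integral_sub_separable_le:
  fixes h :: "real \<Rightarrow> real" and g :: "nat \<Rightarrow> real \<Rightarrow> real"
  assumes h: "continuous_on {-1..1} h" and g: "\<And>n. continuous_on {-1..1} (g n)"
    and approx: "\<And>t. t \<in> {-1..1} \<Longrightarrow> \<bar>h t - (\<Sum>n<N. a n * g n t)\<bar> \<le> \<epsilon>"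
    and \<phi>: "L2_11 \<phi>"
  shows "\<bar>integral {-1..1} (\<lambda>t. h t * \<phi> t) - (\<Sum>n<N. a n * integral {-1..1} (\<lambda>t. g n t * \<phi> t))\<bar>
    \<le> \<epsilon> * integral {-1..1} (\<lambda>t. \<bar>\<phi> t\<bar>)"
proof -
  have int_g: "(\<lambda>t. a n * (g n t * \<phi> t)) integrable_on {-1..1}" for n
    using continuous_mult_L2_11_integrable[OF g \<phi>] integrable_on_mult_right by blast
  have cont: "continuous_on {-1..1} (\<lambda>t. h t - (\<Sum>n<N. a n * g n t))"
    using h g by (intro continuous_intros) auto
  have "(\<Sum>n<N. a n * integral {-1..1} (\<lambda>t. g n t * \<phi> t)) =
      integral {-1..1} (\<lambda>t. \<Sum>n<N. a n * (g n t * \<phi> t))"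
    using int_g by (simp add: integral_sum)
  then have "integral {-1..1} (\<lambda>t. h t * \<phi> t) - (\<Sum>n<N. a n * integral {-1..1} (\<lambda>t. g n t * \<phi> t)) =
      integral {-1..1} (\<lambda>t. (h t - (\<Sum>n<N. a n * g n t)) * \<phi> t)"
    using continuous_mult_L2_11_integrable[OF h \<phi>] int_g
    by (simp add: integral_diff integrable_sum left_diff_distrib sum_distrib_right mult.assoc)
  then show ?thesis
    using abs_integral_mult_le[OF continuous_mult_L2_11_integrable[OF cont \<phi>]
        L2_11_abs_integrable[OF \<phi>]] approx by auto
qed

lemma separable_kernel_form:
  fixes g :: "nat \<Rightarrow> real \<Rightarrow> real" and N :: nat
  assumes g: "\<And>n. continuous_on {-1..1} (g n)" and \<phi>: "L2_11 \<phi>" and \<psi>: "L2_11 \<psi>"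
  defines "S x \<equiv> \<Sum>n<N. g n x * integral {-1..1} (\<lambda>t. g n t * \<phi> t)"
  shows "(\<lambda>x. S x * \<psi> x) integrable_on {-1..1}"
    and "integral {-1..1} (\<lambda>x. S x * \<psi> x) =
         (\<Sum>n<N. integral {-1..1} (\<lambda>x. g n x * \<psi> x) * integral {-1..1} (\<lambda>t. g n t * \<phi> t))"
proof -
  have S: "(\<lambda>x. S x * \<psi> x) =
      (\<lambda>x. \<Sum>n<N. integral {-1..1} (\<lambda>t. g n t * \<phi> t) * (g n x * \<psi> x))"
    by (simp add: S_def sum_distrib_left sum_distrib_right mult_ac)
  have int: "(\<lambda>x. integral {-1..1} (\<lambda>t. g n t * \<phi> t) * (g n x * \<psi> x)) integrable_on {-1..1}" for n
    using continuous_mult_L2_11_integrable[OF g \<psi>] integrable_on_mult_right by blast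
  show "(\<lambda>x. S x * \<psi> x) integrable_on {-1..1}"
    unfolding S using int by (intro integrable_sum) auto
  show "integral {-1..1} (\<lambda>x. S x * \<psi> x) =
      (\<Sum>n<N. integral {-1..1} (\<lambda>x. g n x * \<psi> x) * integral {-1..1} (\<lambda>t. g n t * \<phi> t))"
    unfolding S using int by (simp add: integral_sum mult.commute)
qed

lemma kernel_form_approx:
  fixes K :: "real \<Rightarrow> real \<Rightarrow> real" and g :: "nat \<Rightarrow> real \<Rightarrow> real"
  assumes K: "\<And>x. continuous_on {-1..1} (K x)" and g: "\<And>n. continuous_on {-1..1} (g n)"
    and approx: "\<And>x t. x \<in> {-1..1} \<Longrightarrow> t \<in> {-1..1} \<Longrightarrow> \<bar>K x t - (\<Sum>n<N. g n x * g n t)\<bar> \<le> \<epsilon>"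
    and \<phi>: "L2_11 \<phi>" and \<psi>: "L2_11 \<psi>"
    and int: "(\<lambda>x. integral {-1..1} (\<lambda>t. K x t * \<phi> t) * \<psi> x) integrable_on {-1..1}"
  shows "\<bar>integral {-1..1} (\<lambda>x. integral {-1..1} (\<lambda>t. K x t * \<phi> t) * \<psi> x) -
      (\<Sum>n<N. integral {-1..1} (\<lambda>x. g n x * \<psi> x) * integral {-1..1} (\<lambda>t. g n t * \<phi> t))\<bar>
    \<le> \<epsilon> * integral {-1..1} (\<lambda>t. \<bar>\<phi> t\<bar>) * integral {-1..1} (\<lambda>x. \<bar>\<psi> x\<bar>)"
proof -
  define S where "S x = (\<Sum>n<N. g n x * integral {-1..1} (\<lambda>t. g n t * \<phi> t))" for x
  have pointwise: "\<bar>integral {-1..1} (\<lambda>t. K x t * \<phi> t) - S x\<bar> \<le> \<epsilon> * integral {-1..1} (\<lambda>t. \<bar>\<phi> t\<bar>)"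
    if "x \<in> {-1..1}" for x
    unfolding S_def using that by (intro abs_integral_sub_separable_le K g \<phi> approx)
  have int_S: "(\<lambda>x. S x * \<psi> x) integrable_on {-1..1}"
    using separable_kernel_form(1)[where g=g and N=N, OF g \<phi> \<psi>] by (simp add: S_def)
  have "(\<lambda>x. (integral {-1..1} (\<lambda>t. K x t * \<phi> t) - S x) * \<psi> x) integrable_on {-1..1}"
    unfolding left_diff_distrib using int int_S by (rule integrable_diff)
  then have "\<bar>integral {-1..1} (\<lambda>x. (integral {-1..1} (\<lambda>t. K x t * \<phi> t) - S x) * \<psi> x)\<bar>
      \<le> \<epsilon> * integral {-1..1} (\<lambda>t. \<bar>\<phi> t\<bar>) * integral {-1..1} (\<lambda>x. \<bar>\<psi> x\<bar>)"
    using abs_integral_mult_le[OF _ L2_11_abs_integrable[OF \<psi>]] pointwise by simp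
  then show ?thesis
    unfolding left_diff_distrib integral_diff[OF int int_S]
    using separable_kernel_form(2)[where g=g and N=N, OF g \<phi> \<psi>] by (simp add: S_def)
qed

text \<open>A uniform limit of symmetric degenerate kernels gives a symmetric bilinear form on \<open>L\<^sup>2\<close>;
  this avoids Fubini's theorem for merely square-integrable functions.\<close>

lemma kernel_form_symmetric:
  fixes K :: "real \<Rightarrow> real \<Rightarrow> real" and g :: "nat \<Rightarrow> real \<Rightarrow> real"
  assumes K: "\<And>x. continuous_on {-1..1} (K x)" and g: "\<And>n. continuous_on {-1..1} (g n)"
    and approx: "\<And>\<epsilon>. \<epsilon> > 0 \<Longrightarrow> \<exists>N. \<forall>x\<in>{-1..1}. \<forall>t\<in>{-1..1}. \<bar>K x t - (\<Sum>n<N. g n x * g n t)\<bar> \<le> \<epsilon>"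
    and \<phi>: "L2_11 \<phi>" and \<psi>: "L2_11 \<psi>"
    and int_\<phi>: "(\<lambda>x. integral {-1..1} (\<lambda>t. K x t * \<phi> t) * \<psi> x) integrable_on {-1..1}"
    and int_\<psi>: "(\<lambda>x. integral {-1..1} (\<lambda>t. K x t * \<psi> t) * \<phi> x) integrable_on {-1..1}"
  shows "integral {-1..1} (\<lambda>x. integral {-1..1} (\<lambda>t. K x t * \<phi> t) * \<psi> x) =
         integral {-1..1} (\<lambda>x. integral {-1..1} (\<lambda>t. K x t * \<psi> t) * \<phi> x)"
    (is "?A = ?B")
proof -
  define C where "C = integral {-1..1} (\<lambda>t. \<bar>\<phi> t\<bar>) * integral {-1..1} (\<lambda>t. \<bar>\<psi> t\<bar>)"
  have "C \<ge> 0"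
    unfolding C_def using L2_11_abs_integrable \<phi> \<psi>
    by (intro mult_nonneg_nonneg integral_nonneg) auto
  have eps: "\<bar>?A - ?B\<bar> \<le> 2 * \<epsilon> * C" if \<epsilon>: "\<epsilon> > 0" for \<epsilon>
  proof -
    obtain N where N: "\<forall>x\<in>{-1..1}. \<forall>t\<in>{-1..1}. \<bar>K x t - (\<Sum>n<N. g n x * g n t)\<bar> \<le> \<epsilon>"
      using approx[OF \<epsilon>] by blast
    have "\<bar>?A - (\<Sum>n<N. integral {-1..1} (\<lambda>x. g n x * \<psi> x) * integral {-1..1} (\<lambda>t. g n t * \<phi> t))\<bar>
        \<le> \<epsilon> * C"
      using kernel_form_approx[where g=g and N=N and \<epsilon>=\<epsilon>, OF K g _ \<phi> \<psi> int_\<phi>] N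
      by (simp add: C_def)
    moreover have "\<bar>?B - (\<Sum>n<N. integral {-1..1} (\<lambda>x. g n x * \<phi> x) * integral {-1..1} (\<lambda>t. g n t * \<psi> t))\<bar>
        \<le> \<epsilon> * C"
      using kernel_form_approx[where g=g and N=N and \<epsilon>=\<epsilon>, OF K g _ \<psi> \<phi> int_\<psi>] N
      by (simp add: C_def mult_ac)
    ultimately show ?thesis
      by (simp add: mult.commute)
  qed
  have "\<bar>?A - ?B\<bar> \<le> 0"
  proof (rule field_le_epsilon)
    fix e :: real assume "e > 0"
    then have "\<bar>?A - ?B\<bar> \<le> 2 * (e / (2 * C + 1)) * C"
      using \<open>C \<ge> 0\<close> by (intro eps) simp
    also have "\<dots> \<le> e"
      using \<open>C \<ge> 0\<close> \<open>e > 0\<close> by (simp add: field_simps)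
    finally show "\<bar>?A - ?B\<bar> \<le> 0 + e" by simp
  qed
  then show ?thesis
    by simp
qed

lemma gauss_form_symmetric:
  assumes \<phi>: "L2_11 \<phi>" and \<psi>: "L2_11 \<psi>"
    and "(\<lambda>x. gauss_op \<sigma> \<phi> x * \<psi> x) integrable_on {-1..1}"
    and "(\<lambda>x. gauss_op \<sigma> \<psi> x * \<phi> x) integrable_on {-1..1}"
  shows "integral {-1..1} (\<lambda>x. gauss_op \<sigma> \<phi> x * \<psi> x) = integral {-1..1} (\<lambda>x. gauss_op \<sigma> \<psi> x * \<phi> x)"
proof -
  obtain g :: "nat \<Rightarrow> real \<Rightarrow> real" where g: "\<And>n. continuous_on {-1..1} (g n)"
    and approx: "\<And>\<epsilon>. \<epsilon> > 0 \<Longrightarrow> \<exists>N. \<forall>x\<in>{-1..1}. \<forall>t\<in>{-1..1}.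
      \<bar>gauss_kernel \<sigma> x t - (\<Sum>n<N. g n x * g n t)\<bar> \<le> \<epsilon>"
    using gauss_kernel_separable_approx[of \<sigma>] by blast
  have "continuous_on {-1..1} (gauss_kernel \<sigma> x)" for x
    unfolding gauss_kernel_def by (intro continuous_intros)
  from kernel_form_symmetric[where g=g, OF this g approx \<phi> \<psi>] assms(3,4) show ?thesis
    by (simp add: gauss_op_def)
qed

section \<open>Orthonormal eigenfunctions\<close>

lemma in_eigenspace_form:
  assumes eig: "in_eigenspace \<sigma> \<mu> \<phi>" and \<psi>: "L2_11 \<psi>"
  shows "(\<lambda>x. gauss_op \<sigma> \<phi> x * \<psi> x) integrable_on {-1..1}"
    and "integral {-1..1} (\<lambda>x. gauss_op \<sigma> \<phi> x * \<psi> x) = \<mu> * integral {-1..1} (\<lambda>x. \<phi> x * \<psi> x)"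
proof -
  have \<phi>: "L2_11 \<phi>" and null: "negligible {x \<in> {-1..1}. gauss_op \<sigma> \<phi> x \<noteq> \<mu> * \<phi> x}"
    using eig by (auto simp: in_eigenspace_def)
  have int: "(\<lambda>x. \<mu> * (\<phi> x * \<psi> x)) integrable_on {-1..1}"
    using L2_11_mult_integrable[OF \<phi> \<psi>] integrable_on_mult_right by blast
  have eq: "gauss_op \<sigma> \<phi> x * \<psi> x = \<mu> * (\<phi> x * \<psi> x)"
    if "x \<in> {-1..1} - {x \<in> {-1..1}. gauss_op \<sigma> \<phi> x \<noteq> \<mu> * \<phi> x}" for x
    using that by auto
  show "(\<lambda>x. gauss_op \<sigma> \<phi> x * \<psi> x) integrable_on {-1..1}"
    by (rule integrable_spike[OF int null eq])
  show "integral {-1..1} (\<lambda>x. gauss_op \<sigma> \<phi> x * \<psi> x) = \<mu> * integral {-1..1} (\<lambda>x. \<phi> x * \<psi> x)"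
  proof -
    have "integral {-1..1} (\<lambda>x. \<mu> * (\<phi> x * \<psi> x)) = integral {-1..1} (\<lambda>x. gauss_op \<sigma> \<phi> x * \<psi> x)"
      by (rule integral_spike[OF null eq])
    then show ?thesis
      by simp
  qed
qed

lemma in_eigenspace_orthogonal:
  assumes \<phi>: "in_eigenspace \<sigma> \<mu> \<phi>" and \<psi>: "in_eigenspace \<sigma> \<nu> \<psi>" and "\<mu> \<noteq> \<nu>"
  shows "integral {-1..1} (\<lambda>x. \<phi> x * \<psi> x) = 0"
proof -
  have L2: "L2_11 \<phi>" "L2_11 \<psi>"
    using \<phi> \<psi> by (auto simp: in_eigenspace_def)
  have "\<mu> * integral {-1..1} (\<lambda>x. \<phi> x * \<psi> x) = \<nu> * integral {-1..1} (\<lambda>x. \<psi> x * \<phi> x)"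
    using gauss_form_symmetric[OF L2 in_eigenspace_form(1)[OF \<phi> L2(2)] in_eigenspace_form(1)[OF \<psi> L2(1)]]
    by (simp add: in_eigenspace_form(2)[OF \<phi> L2(2)] in_eigenspace_form(2)[OF \<psi> L2(1)])
  then show ?thesis
    using \<open>\<mu> \<noteq> \<nu>\<close> by (simp add: mult.commute[of "\<psi> _"])
qed

lemma eig_mult_orthonormal_family:
  assumes "enat n \<le> eig_mult \<sigma> \<mu>"
  shows "\<exists>\<phi>. (\<forall>i<n. in_eigenspace \<sigma> \<mu> (\<phi> i)) \<and>
      (\<forall>i<n. \<forall>j<n. integral {-1..1} (\<lambda>x. \<phi> i x * \<phi> j x) = (if i = j then 1 else 0))"
proof (cases n)
  case (Suc n')
  then have "enat n' < eig_mult \<sigma> \<mu>"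
    using assms by (metis enat_ord_simps(2) lessI order_less_le_trans)
  then obtain n'' \<phi> where "n' < n''" and "\<forall>i<n''. in_eigenspace \<sigma> \<mu> (\<phi> i)"
    and "\<forall>i<n''. \<forall>j<n''. integral {-1..1} (\<lambda>x. \<phi> i x * \<phi> j x) = (if i = j then 1 else 0)"
    unfolding eig_mult_def less_Sup_iff by auto
  then show ?thesis
    using Suc by (intro exI[of _ \<phi>]) auto
qed auto

lemma is_eigenvalue_seq_antimono:
  assumes "is_eigenvalue_seq \<sigma> lam" and "1 \<le> j" and "j \<le> k"
  shows "lam k \<le> lam j"
  using assms(3)
proof (induction k rule: dec_induct)
  case (step n)
  then show ?case
    using assms(1,2) by (auto simp: is_eigenvalue_seq_def intro: order_trans)
qed simp

lemma is_eigenvalue_seq_eigenspace_family: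
  fixes lam :: "nat \<Rightarrow> real" and k :: nat
  assumes "is_eigenvalue_seq \<sigma> lam" and "\<mu> \<noteq> 0"
  defines "n \<equiv> card {j. 1 \<le> j \<and> j \<le> k \<and> lam j = \<mu>}"
  shows "\<exists>\<phi>. (\<forall>i<n. in_eigenspace \<sigma> \<mu> (\<phi> i)) \<and>
      (\<forall>i<n. \<forall>j<n. integral {-1..1} (\<lambda>x. \<phi> i x * \<phi> j x) = (if i = j then 1 else 0))"
proof (rule eig_mult_orthonormal_family)
  show "enat n \<le> eig_mult \<sigma> \<mu>"
  proof (cases "finite {j. j \<ge> 1 \<and> lam j = \<mu>}")
    case True
    then have "n \<le> card {j. j \<ge> 1 \<and> lam j = \<mu>}"
      unfolding n_def by (intro card_mono) auto
    then show ?thesis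
      using assms True by (simp add: is_eigenvalue_seq_def)
  next
    case False
    then show ?thesis
      using assms by (simp add: is_eigenvalue_seq_def)
  qed
qed

lemma is_eigenvalue_seq_orthonormal_family:
  assumes seq: "is_eigenvalue_seq \<sigma> lam" and pos: "lam k > 0"
  shows "\<exists>\<Phi> \<mu>. (\<forall>i<k. in_eigenspace \<sigma> (\<mu> i) (\<Phi> i) \<and> lam k \<le> \<mu> i) \<and>
     (\<forall>i<k. \<forall>i'<k. integral {-1..1} (\<lambda>x. \<Phi> i x * \<Phi> i' x) = (if i = i' then 1 else 0))"
proof -
  define J where "J v = {j. 1 \<le> j \<and> j \<le> k \<and> lam j = v}" for v
  have "finite (J v)" for v
    by (rule finite_subset[of _ "{..k}"]) (auto simp: J_def)
  then have "\<forall>v. \<exists>h. bij_betw h (J v) {0..<card (J v)}"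
    using ex_bij_betw_finite_nat by blast
  from choice[OF this] obtain b where b: "\<And>v. bij_betw (b v) (J v) {0..<card (J v)}"
    by blast
  have "\<forall>v\<in>lam ` {1..k}. \<exists>F. (\<forall>i<card (J v). in_eigenspace \<sigma> v (F i)) \<and>
      (\<forall>i<card (J v). \<forall>j<card (J v). integral {-1..1} (\<lambda>x. F i x * F j x) = (if i = j then 1 else 0))"
  proof
    fix v assume "v \<in> lam ` {1..k}"
    then have "v \<noteq> 0"
      using pos is_eigenvalue_seq_antimono[OF seq] by fastforce
    then show "\<exists>F. (\<forall>i<card (J v). in_eigenspace \<sigma> v (F i)) \<and>
      (\<forall>i<card (J v). \<forall>j<card (J v). integral {-1..1} (\<lambda>x. F i x * F j x) = (if i = j then 1 else 0))"
      using is_eigenvalue_seq_eigenspace_family[OF seq] unfolding J_def by blast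
  qed
  from bchoice[OF this] obtain F where F: "\<And>v. v \<in> lam ` {1..k} \<Longrightarrow>
      (\<forall>i<card (J v). in_eigenspace \<sigma> v (F v i)) \<and>
      (\<forall>i<card (J v). \<forall>j<card (J v). integral {-1..1} (\<lambda>x. F v i x * F v j x) = (if i = j then 1 else 0))"
    by blast
  txt \<open>The \<open>j\<close>-th eigenvalue (\<open>j = i + 1\<close>) is assigned the member of the orthonormal family
    for \<open>lam j\<close> whose index is the rank \<open>b (lam j) j\<close> of \<open>j\<close> among the indices carrying the same value.\<close>
  define \<Phi> where "\<Phi> i = F (lam (Suc i)) (b (lam (Suc i)) (Suc i))" for i
  have J: "Suc i \<in> J (lam (Suc i))" "lam (Suc i) \<in> lam ` {1..k}" if "i < k" for i
    using that by (auto simp: J_def)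
  have idx: "b (lam (Suc i)) (Suc i) < card (J (lam (Suc i)))" if "i < k" for i
    using b J(1)[OF that] bij_betwE by fastforce
  have eig: "in_eigenspace \<sigma> (lam (Suc i)) (\<Phi> i)" if "i < k" for i
    using F[OF J(2)[OF that]] idx[OF that] by (simp add: \<Phi>_def)
  have "integral {-1..1} (\<lambda>x. \<Phi> i x * \<Phi> i' x) = (if i = i' then 1 else 0)" if "i < k" "i' < k" for i i'
  proof (cases "lam (Suc i) = lam (Suc i')")
    case True
    have "b (lam (Suc i)) (Suc i) = b (lam (Suc i)) (Suc i') \<longleftrightarrow> i = i'"
      using b[of "lam (Suc i)"] J(1)[OF that(1)] J(1)[OF that(2)] True
      by (auto simp: bij_betw_def inj_on_def)
    then show ?thesis
      using F[OF J(2)[OF that(1)]] idx[OF that(1)] idx[OF that(2)] True by (simp add: \<Phi>_def)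
  next
    case False
    then show ?thesis
      using in_eigenspace_orthogonal[OF eig[OF that(1)] eig[OF that(2)]] by auto
  qed
  moreover have "lam k \<le> lam (Suc i)" if "i < k" for i
    using is_eigenvalue_seq_antimono[OF seq] that by simp
  ultimately show ?thesis
    using eig by (intro exI[of _ \<Phi>] exI[of _ "\<lambda>i. lam (Suc i)"]) auto
qed

section \<open>The Rayleigh-quotient bound\<close>

lemma homogeneous_system_nontrivial_solution:
  fixes A :: "'r \<Rightarrow> 'v \<Rightarrow> real"
  assumes "finite R" and "finite V" and "card R < card V"
  shows "\<exists>c. (\<exists>i\<in>V. c i \<noteq> 0) \<and> (\<forall>j\<in>R. (\<Sum>i\<in>V. A j i * c i) = 0)"
  using assms
proof (induction R arbitrary: V A rule: finite_induct)
  case empty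
  then obtain i0 where "i0 \<in> V"
    by fastforce
  then show ?case
    by (intro exI[of _ "\<lambda>i. if i = i0 then 1 else 0"]) auto
next
  case (insert j0 R)
  show ?case
  proof (cases "\<forall>i\<in>V. A j0 i = 0")
    case True
    then show ?thesis
      using insert.IH[of V A] insert.hyps insert.prems by auto
  next
    case False
    then obtain p where p: "p \<in> V" "A j0 p \<noteq> 0"
      by blast
    define B where "B j i = A j i - A j p / A j0 p * A j0 i" for j i
    have "card R < card (V - {p})"
      using insert.hyps insert.prems p by simp
    then obtain c' where c': "\<exists>i\<in>V - {p}. c' i \<noteq> 0" "\<forall>j\<in>R. (\<Sum>i\<in>V - {p}. B j i * c' i) = 0"
      using insert.IH[of "V - {p}" B] insert.prems by blast
    define S where "S = (\<Sum>i\<in>V - {p}. A j0 i * c' i)"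
    define c where "c = c'(p := - S / A j0 p)"
    have sum_c: "(\<Sum>i\<in>V. A j i * c i) = A j p * c p + (\<Sum>i\<in>V - {p}. A j i * c' i)" for j
      using insert.prems p by (simp add: sum.remove c_def)
    have "(\<Sum>i\<in>V. A j i * c i) = 0" if "j \<in> insert j0 R" for j
    proof (cases "j = j0")
      case False
      then have "(\<Sum>i\<in>V - {p}. B j i * c' i) = 0"
        using c' that by auto
      then have "(\<Sum>i\<in>V - {p}. A j i * c' i) = A j p / A j0 p * S"
        by (simp add: B_def S_def left_diff_distrib sum_subtractf sum_distrib_left mult.assoc)
      then show ?thesis
        unfolding sum_c using p by (simp add: c_def)
    qed (use p in \<open>simp add: sum_c, simp add: c_def S_def\<close>)
    moreover have "\<exists>i\<in>V. c i \<noteq> 0"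
      using c' by (auto simp: c_def)
    ultimately show ?thesis
      by blast
  qed
qed

lemma poly_eq_sum_lessThan:
  fixes p :: "'a :: {comm_semiring_0, semiring_1} poly"
  assumes "\<forall>j\<ge>m. coeff p j = 0"
  shows "poly p t = (\<Sum>j<m. coeff p j * t ^ j)"
proof -
  have "poly p t = (\<Sum>j\<le>degree p. coeff p j * t ^ j)"
    by (rule poly_altdef)
  also have "\<dots> = (\<Sum>j<max m (Suc (degree p)). coeff p j * t ^ j)"
    by (rule sum.mono_neutral_left) (auto simp: coeff_eq_0)
  also have "\<dots> = (\<Sum>j<m. coeff p j * t ^ j)"
    by (rule sum.mono_neutral_right) (use assms in auto)
  finally show ?thesis .
qed

lemma exists_combination_orthogonal_to_polys:
  fixes \<Phi> :: "nat \<Rightarrow> real \<Rightarrow> real"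
  assumes "m < k" and L2: "\<And>i. i < k \<Longrightarrow> L2_11 (\<Phi> i)"
  shows "\<exists>c. (\<exists>i<k. c i \<noteq> 0) \<and> (\<forall>p. (\<forall>j\<ge>m. coeff p j = 0) \<longrightarrow>
           integral {-1..1} (\<lambda>t. poly p t * (\<Sum>i<k. c i * \<Phi> i t)) = 0)"
proof -
  have int: "(\<lambda>t. t ^ j * \<Phi> i t) integrable_on {-1..1}" if "i < k" for i j
    by (intro continuous_mult_L2_11_integrable L2 that continuous_intros)
  obtain c where c: "\<exists>i<k. c i \<noteq> 0"
    and eqs: "\<And>j. j < m \<Longrightarrow> (\<Sum>i<k. integral {-1..1} (\<lambda>t. t ^ j * \<Phi> i t) * c i) = 0"
    using homogeneous_system_nontrivial_solution[of "{..<m}" "{..<k}"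
        "\<lambda>j i. integral {-1..1} (\<lambda>t. t ^ j * \<Phi> i t)"] assms by auto
  have "integral {-1..1} (\<lambda>t. poly p t * (\<Sum>i<k. c i * \<Phi> i t)) = 0"
    if p: "\<forall>j\<ge>m. coeff p j = 0" for p
  proof -
    have "integral {-1..1} (\<lambda>t. poly p t * (\<Sum>i<k. c i * \<Phi> i t)) =
        integral {-1..1} (\<lambda>t. \<Sum>j<m. \<Sum>i<k. (coeff p j * c i) * (t ^ j * \<Phi> i t))"
      by (simp add: poly_eq_sum_lessThan[OF p] sum_distrib_left sum_distrib_right mult_ac)
    also have "\<dots> = (\<Sum>j<m. integral {-1..1} (\<lambda>t. \<Sum>i<k. (coeff p j * c i) * (t ^ j * \<Phi> i t)))"
      by (rule integral_sum) (auto intro!: integrable_sum integrable_on_mult_right int)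
    also have "\<dots> = (\<Sum>j<m. \<Sum>i<k. (coeff p j * c i) * integral {-1..1} (\<lambda>t. t ^ j * \<Phi> i t))"
      by (intro sum.cong refl, subst integral_sum) (auto intro!: integrable_on_mult_right int)
    also have "\<dots> = (\<Sum>j<m. coeff p j * (\<Sum>i<k. integral {-1..1} (\<lambda>t. t ^ j * \<Phi> i t) * c i))"
      by (simp add: sum_distrib_left mult_ac)
    also have "\<dots> = 0"
      using eqs by simp
    finally show ?thesis .
  qed
  with c show ?thesis
    by blast
qed

lemma gauss_op_integrable: "L2_11 \<phi> \<Longrightarrow> (\<lambda>t. gauss_kernel \<sigma> x t * \<phi> t) integrable_on {-1..1}"
  by (rule continuous_mult_L2_11_integrable) (auto simp: gauss_kernel_def intro!: continuous_intros)

lemma gauss_op_linear_combination: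
  fixes \<Phi> :: "nat \<Rightarrow> real \<Rightarrow> real" and k :: nat
  assumes "\<And>i. i < k \<Longrightarrow> L2_11 (\<Phi> i)"
  shows "gauss_op \<sigma> (\<lambda>t. \<Sum>i<k. c i * \<Phi> i t) x = (\<Sum>i<k. c i * gauss_op \<sigma> (\<Phi> i) x)"
proof -
  have "gauss_op \<sigma> (\<lambda>t. \<Sum>i<k. c i * \<Phi> i t) x =
      integral {-1..1} (\<lambda>t. \<Sum>i<k. c i * (gauss_kernel \<sigma> x t * \<Phi> i t))"
    by (simp add: gauss_op_def sum_distrib_left mult.left_commute)
  also have "\<dots> = (\<Sum>i<k. c i * gauss_op \<sigma> (\<Phi> i) x)"
    using assms gauss_op_integrable
    by (subst integral_sum) (auto simp: gauss_op_def intro!: integrable_on_mult_right)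
  finally show ?thesis .
qed

lemma abs_gauss_op_le_of_orthogonal:
  assumes \<psi>: "L2_11 \<psi>"
    and orth: "\<And>p. \<forall>j\<ge>m. coeff p j = 0 \<Longrightarrow> integral {-1..1} (\<lambda>t. poly p t * \<psi> t) = 0"
    and p: "\<forall>j\<ge>m. coeff p j = 0" "\<And>t. t \<in> {-1..1} \<Longrightarrow> \<bar>gauss_kernel \<sigma> x t - poly p t\<bar> \<le> E"
  shows "\<bar>gauss_op \<sigma> \<psi> x\<bar> \<le> E * integral {-1..1} (\<lambda>t. \<bar>\<psi> t\<bar>)"
proof -
  have int_p: "(\<lambda>t. poly p t * \<psi> t) integrable_on {-1..1}"
    by (intro continuous_mult_L2_11_integrable \<psi> continuous_intros)
  have "gauss_op \<sigma> \<psi> x = integral {-1..1} (\<lambda>t. gauss_kernel \<sigma> x t * \<psi> t) - integral {-1..1} (\<lambda>t. poly p t * \<psi> t)"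
    using orth[OF p(1)] by (simp add: gauss_op_def)
  also have "\<dots> = integral {-1..1} (\<lambda>t. (gauss_kernel \<sigma> x t - poly p t) * \<psi> t)"
    unfolding left_diff_distrib by (rule integral_diff[symmetric, OF gauss_op_integrable[OF \<psi>] int_p])
  finally show ?thesis
    using abs_integral_mult_le[OF _ L2_11_abs_integrable[OF \<psi>] p(2)] int_p gauss_op_integrable[OF \<psi>]
    by (simp add: left_diff_distrib integrable_diff)
qed

lemma eigen_combination_form:
  fixes \<Phi> :: "nat \<Rightarrow> real \<Rightarrow> real" and c :: "nat \<Rightarrow> real" and k :: nat
  assumes eig: "\<And>i. i < k \<Longrightarrow> in_eigenspace \<sigma> (\<mu> i) (\<Phi> i)"
    and orth: "\<And>i i'. i < k \<Longrightarrow> i' < k \<Longrightarrow>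
      integral {-1..1} (\<lambda>x. \<Phi> i x * \<Phi> i' x) = (if i = i' then 1 else 0)"
  defines "\<psi> \<equiv> \<lambda>x. \<Sum>i<k. c i * \<Phi> i x"
  shows "(\<lambda>x. gauss_op \<sigma> \<psi> x * \<psi> x) integrable_on {-1..1}"
    and "integral {-1..1} (\<lambda>x. gauss_op \<sigma> \<psi> x * \<psi> x) = (\<Sum>i<k. c i * c i * \<mu> i)"
proof -
  have L2: "L2_11 (\<Phi> i)" if "i < k" for i
    using eig[OF that] by (simp add: in_eigenspace_def)
  have L2\<psi>: "L2_11 \<psi>"
    unfolding \<psi>_def by (rule L2_11_sum) (auto intro: L2)
  have "gauss_op \<sigma> \<psi> x = (\<Sum>i<k. c i * gauss_op \<sigma> (\<Phi> i) x)" for x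
    unfolding \<psi>_def by (rule gauss_op_linear_combination[OF L2])
  then have T\<psi>: "(\<lambda>x. gauss_op \<sigma> \<psi> x * \<psi> x) = (\<lambda>x. \<Sum>i<k. c i * (gauss_op \<sigma> (\<Phi> i) x * \<psi> x))"
    by (simp add: sum_distrib_right mult.assoc)
  have int: "(\<lambda>x. c i * (gauss_op \<sigma> (\<Phi> i) x * \<psi> x)) integrable_on {-1..1}" if "i < k" for i
    using in_eigenspace_form(1)[OF eig[OF that] L2\<psi>] by (rule integrable_on_mult_right)
  show "(\<lambda>x. gauss_op \<sigma> \<psi> x * \<psi> x) integrable_on {-1..1}"
    unfolding T\<psi> using int by (intro integrable_sum) auto
  have "integral {-1..1} (\<lambda>x. \<Phi> i x * \<psi> x) = c i" if i: "i < k" for i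
  proof -
    have "integral {-1..1} (\<lambda>x. \<Phi> i x * \<psi> x) =
        (\<Sum>j<k. integral {-1..1} (\<lambda>x. c j * (\<Phi> i x * \<Phi> j x)))"
      unfolding \<psi>_def sum_distrib_left mult.left_commute[of "\<Phi> i _"]
      using L2 i by (subst integral_sum) (auto intro!: integrable_on_mult_right L2_11_mult_integrable)
    also have "\<dots> = (\<Sum>j<k. if j = i then c j else 0)"
      using orth[OF i] by (intro sum.cong) auto
    finally show ?thesis
      using i by simp
  qed
  then have eq: "integral {-1..1} (\<lambda>x. c i * (gauss_op \<sigma> (\<Phi> i) x * \<psi> x)) = c i * c i * \<mu> i"
    if "i < k" for i
    using in_eigenspace_form(2)[OF eig[OF that] L2\<psi>] that by simp
  have "integral {-1..1} (\<lambda>x. gauss_op \<sigma> \<psi> x * \<psi> x) =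
      (\<Sum>i<k. integral {-1..1} (\<lambda>x. c i * (gauss_op \<sigma> (\<Phi> i) x * \<psi> x)))"
    unfolding T\<psi> using int by (intro integral_sum) auto
  also have "\<dots> = (\<Sum>i<k. c i * c i * \<mu> i)"
    by (rule sum.cong[OF refl], rule eq) simp
  finally show "integral {-1..1} (\<lambda>x. gauss_op \<sigma> \<psi> x * \<psi> x) = (\<Sum>i<k. c i * c i * \<mu> i)" .
qed

lemma gauss_form_le_of_orthogonal:
  assumes \<psi>: "L2_11 \<psi>"
    and orth: "\<And>p. \<forall>j\<ge>m. coeff p j = 0 \<Longrightarrow> integral {-1..1} (\<lambda>t. poly p t * \<psi> t) = 0"
    and approx: "\<And>x. x \<in> {-1..1} \<Longrightarrow> \<exists>p. (\<forall>j\<ge>m. coeff p j = 0) \<and>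
      (\<forall>t\<in>{-1..1}. \<bar>gauss_kernel \<sigma> x t - poly p t\<bar> \<le> E)"
    and int: "(\<lambda>x. gauss_op \<sigma> \<psi> x * \<psi> x) integrable_on {-1..1}"
  shows "integral {-1..1} (\<lambda>x. gauss_op \<sigma> \<psi> x * \<psi> x) \<le> 2 * E * integral {-1..1} (\<lambda>x. \<psi> x * \<psi> x)"
proof -
  define C where "C = integral {-1..1} (\<lambda>x. \<bar>\<psi> x\<bar>)"
  have "E \<ge> 0"
    using approx[of 0] by (force intro: order_trans[OF abs_ge_zero])
  have "\<bar>gauss_op \<sigma> \<psi> x\<bar> \<le> E * C" if x: "x \<in> {-1..1}" for x
  proof -
    obtain p where "\<forall>j\<ge>m. coeff p j = 0" "\<forall>t\<in>{-1..1}. \<bar>gauss_kernel \<sigma> x t - poly p t\<bar> \<le> E"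
      using approx[OF x] by blast
    then show ?thesis
      unfolding C_def by (intro abs_gauss_op_le_of_orthogonal[OF \<psi> orth]) auto
  qed
  then have "\<bar>integral {-1..1} (\<lambda>x. gauss_op \<sigma> \<psi> x * \<psi> x)\<bar> \<le> E * C * C"
    unfolding C_def using int by (intro abs_integral_mult_le L2_11_abs_integrable[OF \<psi>]) auto
  also have "\<dots> \<le> E * (2 * integral {-1..1} (\<lambda>x. \<psi> x * \<psi> x))"
    using integral_abs_squared_le[OF \<psi>] \<open>E \<ge> 0\<close>
    by (simp add: C_def power2_eq_square mult.assoc mult_left_mono)
  finally show ?thesis
    by simp
qed

lemma eigenvalue_le_twice_poly_approx_error:
  fixes \<Phi> :: "nat \<Rightarrow> real \<Rightarrow> real" and \<mu> :: "nat \<Rightarrow> real"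
  assumes k: "k \<ge> 1"
    and eig: "\<And>i. i < k \<Longrightarrow> in_eigenspace \<sigma> (\<mu> i) (\<Phi> i)" and ge: "\<And>i. i < k \<Longrightarrow> l \<le> \<mu> i"
    and orth: "\<And>i i'. i < k \<Longrightarrow> i' < k \<Longrightarrow>
      integral {-1..1} (\<lambda>x. \<Phi> i x * \<Phi> i' x) = (if i = i' then 1 else 0)"
    and approx: "\<And>x. x \<in> {-1..1} \<Longrightarrow> \<exists>p. (\<forall>j\<ge>k - 1. coeff p j = 0) \<and>
      (\<forall>t\<in>{-1..1}. \<bar>gauss_kernel \<sigma> x t - poly p t\<bar> \<le> E)"
  shows "l \<le> 2 * E"
proof -
  have L2: "L2_11 (\<Phi> i)" if "i < k" for i
    using eig[OF that] by (simp add: in_eigenspace_def)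
  obtain c where c: "\<exists>i<k. c i \<noteq> 0" and orth_poly: "\<forall>p. (\<forall>j\<ge>k - 1. coeff p j = 0) \<longrightarrow>
      integral {-1..1} (\<lambda>t. poly p t * (\<Sum>i<k. c i * \<Phi> i t)) = 0"
    using exists_combination_orthogonal_to_polys[of "k - 1" k \<Phi>] k L2 by auto
  define \<psi> where "\<psi> x = (\<Sum>i<k. c i * \<Phi> i x)" for x
  define Q where "Q = (\<Sum>i<k. c i * c i)"
  obtain i0 where "i0 < k" "c i0 \<noteq> 0"
    using c by blast
  then have "Q > 0"
    unfolding Q_def by (intro sum_pos2[of "{..<k}" i0]) (auto simp: zero_less_mult_iff linorder_neq_iff)
  have form: "(\<lambda>x. gauss_op \<sigma> \<psi> x * \<psi> x) integrable_on {-1..1}"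
    "integral {-1..1} (\<lambda>x. gauss_op \<sigma> \<psi> x * \<psi> x) = (\<Sum>i<k. c i * c i * \<mu> i)"
    using eigen_combination_form[where \<Phi>=\<Phi> and \<mu>=\<mu> and k=k and c=c, OF eig orth]
    unfolding \<psi>_def[abs_def] by blast+
  have "l * Q \<le> integral {-1..1} (\<lambda>x. gauss_op \<sigma> \<psi> x * \<psi> x)"
    unfolding form(2) Q_def sum_distrib_left
    using ge by (intro sum_mono) (simp add: mult_right_mono mult.commute)
  also have "\<dots> \<le> 2 * E * integral {-1..1} (\<lambda>x. \<psi> x * \<psi> x)"
  proof (rule gauss_form_le_of_orthogonal[OF _ _ approx form(1)])
    show "L2_11 \<psi>"
      unfolding \<psi>_def by (rule L2_11_sum) (auto intro: L2)
    show "integral {-1..1} (\<lambda>t. poly p t * \<psi> t) = 0" if "\<forall>j\<ge>k - 1. coeff p j = 0" for p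
      using orth_poly that by (simp add: \<psi>_def)
  qed
  also have "integral {-1..1} (\<lambda>x. \<psi> x * \<psi> x) = Q"
    unfolding \<psi>_def Q_def by (rule integral_orthonormal_sum_mult) (use L2 orth in auto)
  finally show ?thesis
    using \<open>Q > 0\<close> by simp
qed

theorem lemma9:
  fixes \<sigma> :: real and lam :: "nat \<Rightarrow> real" and k :: nat
  assumes "\<sigma> > 0"
    and "is_eigenvalue_seq \<sigma> lam"
    and "k \<ge> 1"
  shows "lam k < 8 * (if k = 1 then 1
                      else (2 / exp 1 * real (k - 1)) powr (- real (k - 1) / 2)) * \<sigma> ^ (k - 1)"
proof -
  define B where "B = (if k - 1 = 0 then 1 else (2 / exp 1 * real (k - 1)) powr (- real (k - 1) / 2)) * \<sigma> ^ (k - 1)"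
  have B: "8 * (if k = 1 then 1 else (2 / exp 1 * real (k - 1)) powr (- real (k - 1) / 2)) * \<sigma> ^ (k - 1) = 8 * B"
    using assms(3) by (simp add: B_def)
  have "B > 0"
    using assms(1,3) by (simp add: B_def)
  have "lam k \<le> 4 * B" if pos: "lam k > 0"
  proof -
    obtain \<Phi> \<mu> where eig: "\<forall>i<k. in_eigenspace \<sigma> (\<mu> i) (\<Phi> i) \<and> lam k \<le> \<mu> i"
      and orth: "\<forall>i<k. \<forall>i'<k. integral {-1..1} (\<lambda>x. \<Phi> i x * \<Phi> i' x) = (if i = i' then 1 else 0)"
      using is_eigenvalue_seq_orthonormal_family[OF assms(2) pos] by blast
    have "lam k \<le> 2 * (2 * B)"
      using gauss_kernel_poly_approx[OF assms(1), of "k - 1"] eig orth assms(3)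
      by (intro eigenvalue_le_twice_poly_approx_error[of k \<sigma> \<mu> \<Phi>]) (auto simp: B_def mult.assoc)
    then show ?thesis
      by simp
  qed
  then show ?thesis
    unfolding B using \<open>B > 0\<close> by (cases "lam k > 0") auto
qed

end
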